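(* Let $\mathcal{A}$ be a unital commutative C*-algebra with identity $1$, let $d\in\mathbb{N}$, and let $\mathcal{A}^d$ be the standard Hilbert C*-module over $\mathcal{A}$. Let $n\geq d$ and let $\{\tau_j\}_{j=1}^n$ be a collection of vectors in $\mathcal{A}^d$ with $\langle \tau_j,\tau_j\rangle=1$ for all $1\leq j\leq n$. Then, for every $m\in\mathbb{N}$, \[ \sum_{j=1}^n\sum_{k=1}^n\|\langle \tau_j, \tau_k\rangle \|^{2m}\geq \sum_{j=1}^n\sum_{k=1}^n\langle \tau_j, \tau_k\rangle ^{m}\langle \tau_k, \tau_j\rangle ^{m}\geq \frac{n^2}{{d+m-1\choose m}}, \] in particular \[ \sum_{j=1}^n\sum_{k=1}^n\|\langle \tau_j, \tau_k\rangle \|^{2} \geq \sum_{j=1}^n\sum_{k=1}^n\langle \tau_j, \tau_k\rangle \langle \tau_k, \tau_j\rangle \geq \frac{n^2}{d}. \] Further (for $n\geq 2$), for every $m\in\mathbb{N}$, \[ \max _{1\leq j,k \leq n,\, j\neq k}\|\langle \tau_j, \tau_k\rangle \|^{2m}\geq \frac{1}{n-1}\left[\frac{n}{{d+m-1\choose m}}-1\right], \] and in particular \[ \max _{1\leq j,k \leq n,\, j\neq k}\|\langle \tau_j, \tau_k\rangle \|^{2}\geq\frac{n-d}{d(n-1)}. \]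
   Context: The standard Hilbert C*-module $\mathcal{A}^d$ consists of $d$-tuples $(a_1,\dots,a_d)$ of elements of $\mathcal{A}$, with left action $a\cdot(a_1,\dots,a_d)=(aa_1,\dots,aa_d)$ and $\mathcal{A}$-valued inner product $\langle (a_r)_{r=1}^d,(b_r)_{r=1}^d\rangle=\sum_{r=1}^d a_rb_r^*$ (linear in the first variable, conjugate-linear in the second). Inequalities between elements of $\mathcal{A}$ refer to the usual order on self-adjoint elements of the C*-algebra, and a real number $c$ appearing in such an inequality is identified with $c\cdot 1\in\mathcal{A}$; $\|\cdot\|$ is the C*-norm of $\mathcal{A}$. *)

theory Defs
  imports "HOL-Analysis.Analysis"
begin

class comm_cstar_algebra = real_normed_algebra_1 + banach + comm_ring_1 +
  fixes cscale :: "complex \<Rightarrow> 'a \<Rightarrow> 'a"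
    and cstar :: "'a \<Rightarrow> 'a"
  assumes cscale_add_right: "cscale c (x + y) = cscale c x + cscale c y"
    and cscale_add_left: "cscale (c + c') x = cscale c x + cscale c' x"
    and cscale_cscale: "cscale c (cscale c' x) = cscale (c * c') x"
    and cscale_one: "cscale 1 x = x"
    and cscale_of_real: "cscale (complex_of_real r) x = scaleR r x"
    and cscale_mult_left: "cscale c x * y = cscale c (x * y)"
    and cscale_mult_right: "x * cscale c y = cscale c (x * y)"
    and norm_cscale: "norm (cscale c x) = cmod c * norm x"
    and cstar_cstar: "cstar (cstar x) = x"
    and cstar_add: "cstar (x + y) = cstar x + cstar y"
    and cstar_cscale: "cstar (cscale c x) = cscale (cnj c) (cstar x)"
    and cstar_mult: "cstar (x * y) = cstar y * cstar x"
    and cstar_identity: "norm (cstar x * x) = (norm x)\<^sup>2"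

definition cspectrum :: "'a::comm_cstar_algebra \<Rightarrow> complex set" where
  "cspectrum a = {z. \<not> (\<exists>b. b * (a - cscale z 1) = 1 \<and> (a - cscale z 1) * b = 1)}"

definition cpositive :: "'a::comm_cstar_algebra \<Rightarrow> bool" where
  "cpositive a \<longleftrightarrow> cstar a = a \<and> cspectrum a \<subseteq> {z. Im z = 0 \<and> 0 \<le> Re z}"

definition cle :: "'a::comm_cstar_algebra \<Rightarrow> 'a \<Rightarrow> bool" where
  "cle a b \<longleftrightarrow> cstar a = a \<and> cstar b = b \<and> cpositive (b - a)"

text \<open>Standard Hilbert C*-module \<open>A^d\<close>: vectors are functions on \<open>{1..d}\<close>
  (values outside are irrelevant); inner product \<open>\<Sum>r. a_r b_r^*\<close>.\<close>

definition hinner :: "nat \<Rightarrow> (nat \<Rightarrow> 'a::comm_cstar_algebra) \<Rightarrow> (nat \<Rightarrow> 'a) \<Rightarrow> 'a" where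
  "hinner d x y = (\<Sum>r\<in>{1..d}. x r * cstar (y r))"

end

(*
  Expanding the m-th powers of the inner products over multi-indices g in {1..d}^m turns the
  frame potential into sum_{g,g'} F(g,g') F(g',g), where F is the frame operator of the tensor
  powers of the tau_j.  Its entries only depend on the multisets of the indices.  The terms with
  different multisets have the form y y^*, hence are positive; the remaining ones add up to
  sum_c nu_c^2 over the at most (d+m-1 choose m) multisets c, where nu_c collects the diagonal
  entries with multiset c.  Since the tau_j are unit vectors, sum_c nu_c = n, and Cauchy-Schwarz
  gives the lower bound.  The upper bound is the triangle inequality, and comparing the two
  bounds, with the n diagonal terms equal to 1, bounds the largest off-diagonal term.
*)

theory Submission
  imports Defs "HOL-Library.Multiset"
begin

section \<open>The involution\<close>

declare cstar_cstar [simp] cstar_add [simp]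

lemma cstar_mult_commute [simp]: "cstar (x * y :: 'a::comm_cstar_algebra) = cstar x * cstar y"
  by (simp add: cstar_mult mult.commute)

lemma cstar_one [simp]: "cstar (1::'a::comm_cstar_algebra) = 1"
  using cstar_mult[of "cstar (1::'a)" 1] by simp

lemma cstar_zero [simp]: "cstar (0::'a::comm_cstar_algebra) = 0"
  using cstar_add[of "0::'a" 0] by simp

lemma cstar_minus [simp]: "cstar (- x :: 'a::comm_cstar_algebra) = - cstar x"
  using cstar_add[of x "- x"] by (simp add: minus_unique)

lemma cstar_diff [simp]: "cstar (x - y :: 'a::comm_cstar_algebra) = cstar x - cstar y"
  using cstar_add[of x "- y"] by simp

lemma cstar_sum [simp]: "cstar (sum f A :: 'a::comm_cstar_algebra) = (\<Sum>x\<in>A. cstar (f x))"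
  by (induction A rule: infinite_finite_induct) auto

lemma cstar_prod [simp]: "cstar (prod f A :: 'a::comm_cstar_algebra) = (\<Prod>x\<in>A. cstar (f x))"
  by (induction A rule: infinite_finite_induct) auto

lemma cstar_power [simp]: "cstar (x ^ n :: 'a::comm_cstar_algebra) = cstar x ^ n"
  by (induction n) auto

lemma cstar_of_real [simp]: "cstar (of_real r :: 'a::comm_cstar_algebra) = of_real r"
proof -
  have "(of_real r :: 'a) = cscale (complex_of_real r) 1"
    by (simp add: cscale_of_real scaleR_conv_of_real)
  then show ?thesis by (simp add: cstar_cscale)
qed

lemma cstar_of_nat [simp]: "cstar (of_nat k :: 'a::comm_cstar_algebra) = of_nat k"
  using cstar_of_real[of "real k"] by simp

lemma cstar_numeral [simp]: "cstar (numeral k :: 'a::comm_cstar_algebra) = numeral k"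
  using cstar_of_nat[of "numeral k"] by simp

lemma norm_cstar [simp]: "norm (cstar x :: 'a::comm_cstar_algebra) = norm x"
proof -
  have le: "norm y \<le> norm (cstar y)" for y :: 'a
  proof (cases "y = 0")
    case False
    have "norm y * norm y = norm (cstar y * y)" by (simp add: cstar_identity power2_eq_square)
    also have "\<dots> \<le> norm (cstar y) * norm y" by (rule norm_mult_ineq)
    finally show ?thesis using False by simp
  qed simp
  show ?thesis using le[of x] le[of "cstar x"] by simp
qed

lemma norm_of_real_mult: "norm (of_real r * x :: 'a::real_normed_algebra_1) = \<bar>r\<bar> * norm x"
  by (metis norm_scaleR scaleR_conv_of_real)

definition imag_one :: "'a::comm_cstar_algebra" where
  "imag_one = cscale \<i> 1"

lemma cscale_eq: "cscale z x = (of_real (Re z) + of_real (Im z) * imag_one) * (x :: 'a::comm_cstar_algebra)"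
proof -
  have "cscale z x = cscale (complex_of_real (Re z)) x + cscale \<i> (cscale (complex_of_real (Im z)) x)"
    by (subst complex_eq) (simp add: cscale_add_left cscale_cscale mult.commute)
  also have "cscale \<i> (cscale (complex_of_real (Im z)) x) = imag_one * (of_real (Im z) * x)"
    unfolding imag_one_def cscale_mult_left by (simp add: cscale_of_real scaleR_conv_of_real)
  finally show ?thesis by (simp add: cscale_of_real scaleR_conv_of_real algebra_simps)
qed

lemma cscale_minus_left [simp]: "cscale (- c) x = - cscale c (x :: 'a::comm_cstar_algebra)"
  by (simp add: cscale_eq algebra_simps)

lemma cscale_one_eq: "cscale z 1 = of_real (Re z) + of_real (Im z) * (imag_one :: 'a::comm_cstar_algebra)"
  using cscale_eq[of z "1::'a"] by simp

lemma imag_one_squared: "imag_one * imag_one = (-1 :: 'a::comm_cstar_algebra)"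
proof -
  have "imag_one * imag_one = cscale \<i> (cscale \<i> (1::'a))"
    unfolding imag_one_def cscale_mult_left by simp
  also have "\<dots> = -1" using cscale_of_real[of "-1" "1::'a"] by (simp add: cscale_cscale)
  finally show ?thesis .
qed

lemma imag_one_mult_imag_one: "imag_one * (imag_one * x) = - (x :: 'a::comm_cstar_algebra)"
  by (simp flip: mult.assoc add: imag_one_squared)

lemma cstar_imag_one [simp]: "cstar imag_one = - (imag_one :: 'a::comm_cstar_algebra)"
proof -
  have "cstar (imag_one :: 'a) = cscale (- \<i>) 1" unfolding imag_one_def by (simp add: cstar_cscale)
  then show ?thesis by (simp add: cscale_one_eq)
qed

section \<open>Spectrum\<close>

lemma in_cspectrum_iff: "z \<in> cspectrum a \<longleftrightarrow> \<not> (a - cscale z 1) dvd 1"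
  unfolding cspectrum_def by (auto simp: dvd_def mult.commute)

lemma one_minus_dvd_one_if_norm_less_one:
  fixes y :: "'a::{banach, real_normed_algebra_1, comm_ring_1}"
  assumes "norm y < 1"
  shows "(1 - y) dvd 1"
proof -
  have "(\<lambda>n. y ^ n - y ^ Suc n) sums (y ^ 0 - 0)"
    by (rule telescope_sums'[OF LIMSEQ_power_zero[OF assms]])
  then have "(\<lambda>n. (1 - y) * y ^ n) sums 1" by (simp add: algebra_simps)
  moreover have "(\<lambda>n. (1 - y) * y ^ n) sums ((1 - y) * suminf (\<lambda>n. y ^ n))"
    by (intro sums_mult summable_sums complete_algebra_summable_geometric assms)
  ultimately have "1 = (1 - y) * suminf (\<lambda>n. y ^ n)" using sums_unique2 by blast
  then show ?thesis by (rule dvdI)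
qed

lemma norm_cspectrum_le:
  fixes x :: "'a::comm_cstar_algebra"
  assumes "z \<in> cspectrum x"
  shows "cmod z \<le> norm x"
proof (rule ccontr)
  assume "\<not> cmod z \<le> norm x"
  then have lt: "norm x < cmod z" and z: "z \<noteq> 0" by auto
  have "cscale (- z) (1::'a) dvd 1"
    by (rule dvdI[of _ _ "cscale (- 1 / z) 1"]) (use z in \<open>simp add: cscale_mult_left cscale_cscale cscale_one\<close>)
  moreover have "norm (cscale (1 / z) x) < 1" using lt z by (simp add: norm_cscale norm_divide field_simps)
  then have "(1 - cscale (1 / z) x) dvd 1" by (rule one_minus_dvd_one_if_norm_less_one)
  ultimately have "cscale (- z) 1 * (1 - cscale (1 / z) x) dvd 1 * 1" by (rule mult_dvd_mono)
  also have "cscale (- z) 1 * (1 - cscale (1 / z) x) = x - cscale z 1"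
    using z by (simp add: right_diff_distrib cscale_mult_left cscale_cscale cscale_one)
  finally show False using assms by (simp add: in_cspectrum_iff)
qed

text \<open>For self-adjoint \<open>h\<close> and \<open>z \<in> \<sigma>(h)\<close> one has \<open>z + is \<in> \<sigma>(h + is)\<close> and
  \<open>\<parallel>h + is\<parallel>\<^sup>2 = \<parallel>h\<^sup>2 + s\<^sup>2\<parallel> \<le> \<parallel>h\<parallel>\<^sup>2 + s\<^sup>2\<close>, i.e. \<open>\<bar>z\<bar>\<^sup>2 + 2 s Im z \<le> \<parallel>h\<parallel>\<^sup>2\<close> for all real \<open>s\<close>.\<close>

lemma cspectrum_selfadjoint_real:
  fixes h :: "'a::comm_cstar_algebra"
  assumes h: "cstar h = h" and z: "z \<in> cspectrum h"
  shows "Im z = 0"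
proof (rule ccontr)
  assume Im: "Im z \<noteq> 0"
  have bound: "(Re z)\<^sup>2 + (Im z)\<^sup>2 + 2 * Im z * s \<le> (norm h)\<^sup>2" for s :: real
  proof -
    define k where "k = h + of_real s * imag_one"
    have "z + complex_of_real s * \<i> \<in> cspectrum k"
      using z unfolding in_cspectrum_iff k_def cscale_one_eq by (simp add: algebra_simps)
    have "cstar k * k = h * h - of_real s * of_real s * (imag_one * imag_one)"
      using h by (simp add: k_def algebra_simps)
    then have k: "(norm k)\<^sup>2 = norm (h * h + of_real (s * s))"
      by (simp flip: cstar_identity add: imag_one_squared)
    have "(Re z)\<^sup>2 + (Im z + s)\<^sup>2 = (cmod (z + complex_of_real s * \<i>))\<^sup>2"
      by (simp add: cmod_power2)
    also have "\<dots> \<le> (norm k)\<^sup>2"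
      by (simp add: power_mono norm_cspectrum_le \<open>z + complex_of_real s * \<i> \<in> cspectrum k\<close>)
    also have "\<dots> \<le> norm (h * h) + s * s"
      using k norm_triangle_ineq[of "h * h" "of_real (s * s)"] by (simp del: of_real_mult)
    also have "\<dots> \<le> (norm h)\<^sup>2 + s\<^sup>2"
      using norm_mult_ineq[of h h] by (simp add: power2_eq_square)
    finally show ?thesis by (simp add: power2_eq_square algebra_simps)
  qed
  from bound[of "((norm h)\<^sup>2 + 1) / (2 * Im z)"] Im show False
    using zero_le_power2[of "Re z"] zero_le_power2[of "Im z"] by simp
qed

lemma cspectrum_one_minus_scaled:
  fixes h :: "'a::comm_cstar_algebra"
  assumes z: "z \<in> cspectrum h" and "\<epsilon> \<noteq> 0"
  shows "1 - complex_of_real \<epsilon> * z \<in> cspectrum (1 - of_real \<epsilon> * h)"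
proof -
  have "(1 - of_real \<epsilon> * h) - cscale (1 - complex_of_real \<epsilon> * z) 1
      = of_real (- \<epsilon>) * (h - cscale z (1::'a))"
    by (simp add: cscale_one_eq algebra_simps)
  with z show ?thesis unfolding in_cspectrum_iff by (metis dvd_mult_right)
qed

section \<open>Norm-positive elements\<close>

text \<open>Positivity is certified without functional calculus: a self-adjoint \<open>h\<close> is
  norm-positive if \<open>\<parallel>1 - \<epsilon>h\<parallel> \<le> 1 + O(\<epsilon>\<^sup>2)\<close> as \<open>\<epsilon> \<rightarrow> 0+\<close>.  This forces nonnegative spectrum
  and, by convexity of the norm, is closed under sums.\<close>

definition norm_positive :: "'a::comm_cstar_algebra \<Rightarrow> bool" where
  "norm_positive h \<longleftrightarrow> cstar h = h \<and>
     (\<exists>K \<epsilon>0. 0 < \<epsilon>0 \<and> (\<forall>\<epsilon>. 0 < \<epsilon> \<and> \<epsilon> \<le> \<epsilon>0 \<longrightarrow> norm (1 - of_real \<epsilon> * h) \<le> 1 + \<epsilon>\<^sup>2 * K))"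

lemma norm_positiveI:
  assumes "cstar h = h" and "0 < \<epsilon>0"
    and "\<And>\<epsilon>. 0 < \<epsilon> \<Longrightarrow> \<epsilon> \<le> \<epsilon>0 \<Longrightarrow> norm (1 - of_real \<epsilon> * h) \<le> 1 + \<epsilon>\<^sup>2 * K"
  shows "norm_positive h"
  using assms unfolding norm_positive_def by blast

lemma norm_positive_cpositive:
  fixes h :: "'a::comm_cstar_algebra"
  assumes "norm_positive h"
  shows "cpositive h"
proof -
  obtain \<epsilon>0 K :: real where h: "cstar h = h" and "0 < \<epsilon>0"
    and bound: "\<And>\<epsilon>. 0 < \<epsilon> \<Longrightarrow> \<epsilon> \<le> \<epsilon>0 \<Longrightarrow> norm (1 - of_real \<epsilon> * h) \<le> 1 + \<epsilon>\<^sup>2 * K"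
    using assms unfolding norm_positive_def by blast
  have "0 \<le> Re z" if z: "z \<in> cspectrum h" for z
  proof (rule ccontr)
    assume neg: "\<not> 0 \<le> Re z"
    define \<epsilon> where "\<epsilon> = min \<epsilon>0 (- Re z / (\<bar>K\<bar> + 1))"
    have "\<epsilon> \<le> - Re z / (\<bar>K\<bar> + 1)" unfolding \<epsilon>_def by simp
    then have "\<epsilon> * \<bar>K\<bar> + \<epsilon> \<le> - Re z"
      using pos_le_divide_eq[of "\<bar>K\<bar> + 1" \<epsilon> "- Re z"] by (simp add: distrib_left)
    moreover have "0 < \<epsilon>" "\<epsilon> \<le> \<epsilon>0"
      using neg \<open>0 < \<epsilon>0\<close> by (auto simp: \<epsilon>_def divide_neg_pos)
    ultimately have \<epsilon>: "0 < \<epsilon>" "\<epsilon> \<le> \<epsilon>0" "\<epsilon> * \<bar>K\<bar> + \<epsilon> \<le> - Re z" by auto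
    have "z = complex_of_real (Re z)"
      using cspectrum_selfadjoint_real[OF h z] by (simp add: complex_eq_iff)
    then have "cmod (1 - complex_of_real \<epsilon> * z) = \<bar>1 - \<epsilon> * Re z\<bar>"
      by (metis norm_of_real of_real_1 of_real_diff of_real_mult)
    moreover have "\<epsilon> * Re z \<le> 0" using \<epsilon>(1) neg by (simp add: mult_nonneg_nonpos)
    ultimately have "1 - \<epsilon> * Re z = cmod (1 - complex_of_real \<epsilon> * z)" by simp
    also have "\<dots> \<le> norm (1 - of_real \<epsilon> * h)"
      using \<epsilon>(1) by (intro norm_cspectrum_le cspectrum_one_minus_scaled z) simp
    also have "\<dots> \<le> 1 + \<epsilon>\<^sup>2 * K" using bound \<epsilon> by simp
    finally have "\<epsilon> * (- Re z) \<le> \<epsilon> * (\<epsilon> * K)" by (simp add: power2_eq_square)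
    then have "- Re z \<le> \<epsilon> * K" using \<epsilon>(1) mult_le_cancel_left_pos by blast
    moreover have "\<epsilon> * K \<le> \<epsilon> * \<bar>K\<bar>" using \<epsilon>(1) by (simp add: mult_left_mono)
    ultimately show False using \<epsilon> by linarith
  qed
  then show ?thesis unfolding cpositive_def using h cspectrum_selfadjoint_real by blast
qed

lemma norm_positive_zero: "norm_positive (0::'a::comm_cstar_algebra)"
  by (rule norm_positiveI[of _ 1 0]) simp_all

text \<open>\<open>1 - \<epsilon>(h\<^sub>1 + h\<^sub>2)\<close> is the midpoint of \<open>1 - 2\<epsilon>h\<^sub>1\<close> and \<open>1 - 2\<epsilon>h\<^sub>2\<close>.\<close>

lemma norm_positive_add:
  fixes h1 h2 :: "'a::comm_cstar_algebra"
  assumes "norm_positive h1" and "norm_positive h2"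
  shows "norm_positive (h1 + h2)"
proof -
  obtain e1 K1 :: real where "cstar h1 = h1" "0 < e1"
    and b1: "\<And>\<epsilon>. 0 < \<epsilon> \<Longrightarrow> \<epsilon> \<le> e1 \<Longrightarrow> norm (1 - of_real \<epsilon> * h1) \<le> 1 + \<epsilon>\<^sup>2 * K1"
    using assms(1) unfolding norm_positive_def by blast
  obtain e2 K2 :: real where "cstar h2 = h2" "0 < e2"
    and b2: "\<And>\<epsilon>. 0 < \<epsilon> \<Longrightarrow> \<epsilon> \<le> e2 \<Longrightarrow> norm (1 - of_real \<epsilon> * h2) \<le> 1 + \<epsilon>\<^sup>2 * K2"
    using assms(2) unfolding norm_positive_def by blast
  show ?thesis
  proof (rule norm_positiveI[of _ "min e1 e2 / 2" "2 * K1 + 2 * K2"])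
    show "cstar (h1 + h2) = h1 + h2" by (simp add: \<open>cstar h1 = h1\<close> \<open>cstar h2 = h2\<close>)
    show "0 < min e1 e2 / 2" using \<open>0 < e1\<close> \<open>0 < e2\<close> by simp
    fix \<epsilon> :: real
    assume \<epsilon>: "0 < \<epsilon>" "\<epsilon> \<le> min e1 e2 / 2"
    have "1 - of_real \<epsilon> * (h1 + h2) = of_real (1/2) * (1 - of_real (2 * \<epsilon>) * h1)
        + of_real (1/2) * (1 - of_real (2 * \<epsilon>) * h2 :: 'a)"
      by (simp add: algebra_simps flip: of_real_mult of_real_add)
    also have "norm \<dots> \<le> (1/2) * norm (1 - of_real (2 * \<epsilon>) * h1) + (1/2) * norm (1 - of_real (2 * \<epsilon>) * h2)"
      by (rule norm_triangle_le) (simp add: norm_of_real_mult del: of_real_mult)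
    also have "\<dots> \<le> (1/2) * (1 + (2 * \<epsilon>)\<^sup>2 * K1) + (1/2) * (1 + (2 * \<epsilon>)\<^sup>2 * K2)"
      using b1[of "2 * \<epsilon>"] b2[of "2 * \<epsilon>"] \<epsilon> by (intro add_mono mult_left_mono) auto
    also have "\<dots> = 1 + \<epsilon>\<^sup>2 * (2 * K1 + 2 * K2)" by (simp add: power2_eq_square algebra_simps)
    finally show "norm (1 - of_real \<epsilon> * (h1 + h2)) \<le> 1 + \<epsilon>\<^sup>2 * (2 * K1 + 2 * K2)" .
  qed
qed

lemma norm_positive_sum:
  fixes f :: "'b \<Rightarrow> 'a::comm_cstar_algebra"
  assumes "\<And>x. x \<in> A \<Longrightarrow> norm_positive (f x)"
  shows "norm_positive (sum f A)"
  using assms by (induction A rule: infinite_finite_induct) (auto intro: norm_positive_add norm_positive_zero)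

lemma norm_positive_of_real_diff:
  fixes S :: "'a::comm_cstar_algebra"
  assumes S: "cstar S = S" and "norm S \<le> r"
  shows "norm_positive (of_real r - S)"
proof (rule norm_positiveI[of _ "1 / (r + 1)" 0])
  have "0 \<le> r" using assms(2) norm_ge_zero order_trans by blast
  then show "0 < 1 / (r + 1)" by simp
  show "cstar (of_real r - S) = of_real r - S" using S by simp
  fix \<epsilon> :: real
  assume \<epsilon>: "0 < \<epsilon>" "\<epsilon> \<le> 1 / (r + 1)"
  with \<open>0 \<le> r\<close> have "\<epsilon> * r \<le> 1" by (simp add: field_simps)
  have "norm (1 - of_real \<epsilon> * (of_real r - S)) = norm (of_real (1 - \<epsilon> * r) + of_real \<epsilon> * S :: 'a)"
    by (simp add: algebra_simps)
  also have "\<dots> \<le> (1 - \<epsilon> * r) + \<epsilon> * norm S"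
    using norm_triangle_ineq[of "of_real (1 - \<epsilon> * r) :: 'a" "of_real \<epsilon> * S"] \<open>\<epsilon> * r \<le> 1\<close> \<epsilon>(1)
    by (simp add: norm_of_real_mult del: of_real_diff of_real_mult)
  also have "\<dots> \<le> 1 + \<epsilon>\<^sup>2 * 0" using \<epsilon>(1) assms(2) by (simp add: mult_left_mono)
  finally show "norm (1 - of_real \<epsilon> * (of_real r - S)) \<le> 1 + \<epsilon>\<^sup>2 * 0" .
qed

lemma norm_positive_of_real: "0 \<le> c \<Longrightarrow> norm_positive (of_real c :: 'a::comm_cstar_algebra)"
  using norm_positive_of_real_diff[of "0::'a" c] by simp

lemma one_minus_selfadjoint_imag_dvd_one:
  fixes b :: "'a::comm_cstar_algebra"
  assumes "cstar b = b"
  shows "(1 - b * imag_one) dvd 1"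
proof -
  have "- \<i> \<notin> cspectrum b" using cspectrum_selfadjoint_real[OF assms] by force
  then have "(b + imag_one) dvd 1" by (simp add: in_cspectrum_iff cscale_one_eq)
  moreover have "- imag_one dvd (1::'a)"
    by (rule dvdI[of _ _ imag_one]) (simp add: imag_one_squared)
  ultimately have "(b + imag_one) * - imag_one dvd 1 * 1" by (rule mult_dvd_mono)
  then show ?thesis by (simp add: algebra_simps imag_one_squared)
qed

text \<open>If \<open>q\<close> inverts \<open>1 + b\<^sup>2\<close>, then \<open>2q - 1\<close> is the real part of the Cayley transform
  \<open>v = (1 + ib)(1 - ib)\<^sup>-\<^sup>1\<close> of \<open>b\<close>, a unitary.\<close>

lemma norm_cayley_real_part_le:
  fixes b q :: "'a::comm_cstar_algebra"
  assumes b: "cstar b = b" and q: "q * (1 + b * b) = 1"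
  shows "norm (2 * q - 1) \<le> 1"
proof -
  define w where "w = 1 - b * imag_one"
  obtain w' where w': "w' * w = 1"
    using one_minus_selfadjoint_imag_dvd_one[OF b] unfolding w_def by (auto simp: dvd_def mult.commute)
  have w'_star: "cstar w' * cstar w = 1" using arg_cong[OF w', of cstar] by simp
  have w_star: "cstar w = 2 - w" unfolding w_def using b by simp
  have "w * cstar w = 1 + b * b"
    unfolding w_def using b by (simp add: algebra_simps imag_one_mult_imag_one)
  then have q_eq: "q = w' * cstar w'"
    using q w' w'_star by (metis mult.assoc mult.left_commute mult_1_right)
  define v where "v = cstar w * w'"
  have "cstar v * v = (w' * w) * (cstar w' * cstar w)" unfolding v_def by (simp add: ac_simps)
  then have "(norm v)\<^sup>2 = 1" using w' w'_star cstar_identity[of v] by simp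
  then have "norm v = 1" using norm_ge_zero[of v] by (simp add: power2_eq_1_iff)
  have "q * w = cstar w'" "q * cstar w = w'"
    unfolding q_eq using w' w'_star by (metis mult.commute mult.left_commute mult_1_right)+
  then have "w' + cstar w' = q * (w + cstar w)" by (simp add: distrib_left)
  have v: "v = 2 * w' - 1" unfolding v_def w_star using w' by (simp add: algebra_simps)
  have "v + cstar v = 2 * (w' + cstar w') - 2" unfolding v by (simp add: algebra_simps)
  also have "\<dots> = 2 * (2 * q - 1)"
    using \<open>w' + cstar w' = q * (w + cstar w)\<close> w_star by (simp add: algebra_simps)
  finally have "v + cstar v = 2 * (2 * q - 1)" .
  then have "2 * norm (2 * q - 1) \<le> 2"
    using norm_triangle_ineq[of v "cstar v"] norm_of_real_mult[of 2 "2 * q - 1"] \<open>norm v = 1\<close> by simp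
  then show ?thesis by simp
qed

lemma norm_one_minus_two_square_le:
  fixes b :: "'a::comm_cstar_algebra"
  assumes b: "cstar b = b"
  shows "norm (1 - 2 * (b * b)) \<le> 1 + 2 * norm b ^ 4"
proof -
  have "(1 - b * imag_one) * (1 - (- b) * imag_one) dvd 1 * 1"
    using b by (intro mult_dvd_mono one_minus_selfadjoint_imag_dvd_one) simp_all
  moreover have "(1 - b * imag_one) * (1 - (- b) * imag_one) = 1 - b * b * (imag_one * imag_one)"
    by (simp add: algebra_simps)
  ultimately have "(1 + b * b) dvd 1" by (simp add: imag_one_squared)
  then obtain q where q: "q * (1 + b * b) = 1" by (metis dvdE mult.commute)
  have q_half: "norm (2 * q - 1) \<le> 1" by (rule norm_cayley_real_part_le[OF b q])
  then have "norm (2 * q) \<le> 2" using norm_triangle_ineq[of "2 * q - 1" 1] by simp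
  then have "norm q \<le> 1" using norm_of_real_mult[of 2 q] by simp
  define X where "X = 1 - 2 * (b * b) - ((2 * q - 1) - 2 * (b * b) * (b * b) * q)"
  have "X * (1 + b * b) = 2 * (b * b) * (b * b) * (q * (1 + b * b) - 1) - 2 * (q * (1 + b * b) - 1)"
    unfolding X_def by (simp add: algebra_simps)
  then have X0: "X * (1 + b * b) = 0" using q by simp
  have "X = X * (1 + b * b) * q" using q by (simp add: ac_simps)
  then have "X = 0" using X0 by simp
  then have "1 - 2 * (b * b) = (2 * q - 1) - 2 * (b * b) * (b * b) * q"
    unfolding X_def by (simp only: right_minus_eq)
  have "norm (b ^ 4 * q) \<le> norm b ^ 4"
    using norm_mult_ineq[of "b ^ 4" q] norm_power_ineq[of b 4] \<open>norm q \<le> 1\<close>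
    by (smt (verit) mult_left_le norm_ge_zero zero_le_power)
  then have "norm (2 * (b * b) * (b * b) * q) \<le> 2 * norm b ^ 4"
    using norm_of_real_mult[of 2 "b ^ 4 * q"] by (simp add: power4_eq_xxxx ac_simps)
  then show ?thesis
    using norm_triangle_ineq4[of "2 * q - 1" "2 * (b * b) * (b * b) * q"] q_half
    unfolding \<open>1 - 2 * (b * b) = _\<close> by linarith
qed

lemma norm_positive_square:
  fixes a :: "'a::comm_cstar_algebra"
  assumes a: "cstar a = a"
  shows "norm_positive (a * a)"
proof (rule norm_positiveI[of _ 1 "norm a ^ 4 / 2"])
  show "cstar (a * a) = a * a" using a by simp
  fix \<epsilon> :: real
  assume "0 < \<epsilon>"
  define b where "b = of_real (sqrt (\<epsilon> / 2)) * a"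
  have "2 * of_real (\<epsilon> / 2) = (of_real \<epsilon> :: 'a)" using of_real_mult[of 2 "\<epsilon> / 2", where 'a='a] by simp
  then have b_sq: "2 * (b * b) = of_real \<epsilon> * (a * a)"
    using \<open>0 < \<epsilon>\<close> by (simp add: b_def algebra_simps flip: of_real_mult)
  have "sqrt (\<epsilon> / 2) ^ 4 = \<epsilon>\<^sup>2 / 4"
    using \<open>0 < \<epsilon>\<close> by (simp add: power4_eq_xxxx power2_eq_square)
  then have b_norm: "norm b ^ 4 = \<epsilon>\<^sup>2 / 4 * norm a ^ 4"
    by (simp add: b_def norm_of_real_mult power_mult_distrib)
  have "norm (1 - 2 * (b * b)) \<le> 1 + 2 * norm b ^ 4"
    by (rule norm_one_minus_two_square_le) (simp add: b_def a)
  with b_sq b_norm show "norm (1 - of_real \<epsilon> * (a * a)) \<le> 1 + \<epsilon>\<^sup>2 * (norm a ^ 4 / 2)" by simp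
qed simp

lemma norm_positive_mult_cstar: "norm_positive (y * cstar y :: 'a::comm_cstar_algebra)"
proof -
  define p where "p = of_real (1/2) * (y + cstar y)"
  define r where "r = of_real (1/2) * imag_one * (cstar y - y)"
  have "cstar p = p" "cstar r = r" unfolding p_def r_def by (simp_all add: algebra_simps)
  moreover have "4 * of_real (1 / 4) = (1 :: 'a)" using of_real_mult[of 4 "1 / 4"] by simp
  then have "y * cstar y = p * p + r * r"
    unfolding p_def r_def by (simp add: algebra_simps imag_one_mult_imag_one flip: of_real_mult)
  ultimately show ?thesis by (metis norm_positive_add norm_positive_square)
qed

lemma cle_if_norm_positive:
  fixes a b :: "'a::comm_cstar_algebra"
  assumes "norm_positive (b - a)" and "cstar a = a"
  shows "cle a b"
proof -
  have "cstar (b - a) = b - a" using assms(1) unfolding norm_positive_def by blast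
  with assms show ?thesis unfolding cle_def by (simp add: norm_positive_cpositive)
qed

lemma cpositive_of_real_nonneg:
  assumes "cpositive (of_real c :: 'a::comm_cstar_algebra)"
  shows "0 \<le> c"
proof -
  have "complex_of_real c \<in> cspectrum (of_real c :: 'a)"
    unfolding in_cspectrum_iff cscale_one_eq by simp
  with assms show ?thesis unfolding cpositive_def by auto
qed

lemma le_if_norm_positive_between:
  fixes S :: "'a::comm_cstar_algebra"
  assumes "norm_positive (of_real s - S)" and "norm_positive (S - of_real t)"
  shows "t \<le> s"
proof -
  have "norm_positive (of_real (s - t) :: 'a)"
    using norm_positive_add[OF assms] by simp
  then show ?thesis using norm_positive_cpositive cpositive_of_real_nonneg by fastforce
qed

section \<open>Tensor powers\<close>

definition multi_indices :: "nat \<Rightarrow> nat \<Rightarrow> (nat \<Rightarrow> nat) set" where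
  "multi_indices d m = PiE {..<m} (\<lambda>_. {1..d})"

definition tensor_coord :: "(nat \<Rightarrow> 'a::comm_monoid_mult) \<Rightarrow> nat \<Rightarrow> (nat \<Rightarrow> nat) \<Rightarrow> 'a" where
  "tensor_coord x m g = (\<Prod>i<m. x (g i))"

definition index_mset :: "nat \<Rightarrow> (nat \<Rightarrow> nat) \<Rightarrow> nat multiset" where
  "index_mset m g = image_mset g (mset_set {..<m})"

lemma finite_multi_indices [simp]: "finite (multi_indices d m)"
  unfolding multi_indices_def by (simp add: finite_PiE)

lemma multi_indices_nonempty: "1 \<le> d \<Longrightarrow> multi_indices d m \<noteq> {}"
  unfolding multi_indices_def by (simp add: PiE_eq_empty_iff)

lemma card_index_mset_image_le: "card (index_mset m ` multi_indices d m) \<le> (d + m - 1) choose m"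
proof -
  have "index_mset m ` multi_indices d m \<subseteq> multisets_of_size {1..d} m"
    unfolding multisets_of_size_def index_mset_def multi_indices_def by (auto simp: PiE_def Pi_def)
  then have "card (index_mset m ` multi_indices d m) \<le> card (multisets_of_size {1..d} m)"
    by (intro card_mono finite_multisets_of_size) simp_all
  then show ?thesis by (simp add: card_multisets_of_size)
qed

lemma tensor_coord_eq_prod_mset: "tensor_coord x m g = prod_mset (image_mset x (index_mset m g))"
  unfolding tensor_coord_def index_mset_def by (simp add: prod_unfold_prod_mset multiset.map_comp comp_def)

lemma hinner_power:
  "hinner d x y ^ m = (\<Sum>g\<in>multi_indices d m. tensor_coord x m g * cstar (tensor_coord y m g))"
proof -
  have "hinner d x y ^ m = (\<Prod>i<m. \<Sum>r\<in>{1..d}. x r * cstar (y r))"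
    unfolding hinner_def by simp
  also have "\<dots> = (\<Sum>g\<in>multi_indices d m. \<Prod>i<m. x (g i) * cstar (y (g i)))"
    unfolding multi_indices_def by (rule prod_sum_PiE) auto
  finally show ?thesis by (simp add: tensor_coord_def prod.distrib)
qed

lemma cstar_hinner: "cstar (hinner d x y) = hinner d y x"
  unfolding hinner_def by (simp add: mult.commute)

section \<open>The frame potential\<close>

definition frame_potential ::
    "nat \<Rightarrow> (nat \<Rightarrow> nat \<Rightarrow> 'a::comm_cstar_algebra) \<Rightarrow> nat \<Rightarrow> nat \<Rightarrow> 'a" where
  "frame_potential d \<tau> n m =
     (\<Sum>j\<in>{1..n}. \<Sum>k\<in>{1..n}. hinner d (\<tau> j) (\<tau> k) ^ m * hinner d (\<tau> k) (\<tau> j) ^ m)"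

text \<open>The entry at \<open>(g, g')\<close> of the frame operator \<open>\<Sum>\<^sub>j \<tau>\<^sub>j\<^sup>\<otimes>\<^sup>m (\<tau>\<^sub>j\<^sup>\<otimes>\<^sup>m)\<^sup>*\<close> of the
  tensor powers, in the standard basis of \<open>(\<A>\<^sup>d)\<^sup>\<otimes>\<^sup>m\<close> indexed by multi-indices.\<close>

definition tensor_frame_entry ::
    "(nat \<Rightarrow> nat \<Rightarrow> 'a::comm_cstar_algebra) \<Rightarrow> nat \<Rightarrow> nat \<Rightarrow> (nat \<Rightarrow> nat) \<Rightarrow> (nat \<Rightarrow> nat) \<Rightarrow> 'a" where
  "tensor_frame_entry \<tau> n m g g' = (\<Sum>j\<in>{1..n}. tensor_coord (\<tau> j) m g * cstar (tensor_coord (\<tau> j) m g'))"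

lemma cstar_tensor_frame_entry: "cstar (tensor_frame_entry \<tau> n m g g') = tensor_frame_entry \<tau> n m g' g"
  unfolding tensor_frame_entry_def by (simp add: mult.commute)

lemma tensor_frame_entry_cong:
  assumes "index_mset m g = index_mset m g'"
  shows "tensor_frame_entry \<tau> n m g g' = tensor_frame_entry \<tau> n m g g"
    and "tensor_frame_entry \<tau> n m g' g = tensor_frame_entry \<tau> n m g' g'"
  unfolding tensor_frame_entry_def using assms by (simp_all add: tensor_coord_eq_prod_mset)

lemma frame_potential_eq_tensor_frame:
  "frame_potential d \<tau> n m =
     (\<Sum>g\<in>multi_indices d m. \<Sum>g'\<in>multi_indices d m.
        tensor_frame_entry \<tau> n m g g' * tensor_frame_entry \<tau> n m g' g)"
proof -
  let ?G = "multi_indices d m" and ?t = "\<lambda>j g. tensor_coord (\<tau> j) m g"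
  have "frame_potential d \<tau> n m = (\<Sum>j\<in>{1..n}. \<Sum>k\<in>{1..n}. \<Sum>g\<in>?G. \<Sum>g'\<in>?G.
      ?t j g * cstar (?t k g) * (?t k g' * cstar (?t j g')))"
    unfolding frame_potential_def hinner_power by (simp add: sum_product)
  also have "\<dots> = (\<Sum>g\<in>?G. \<Sum>g'\<in>?G. \<Sum>j\<in>{1..n}. \<Sum>k\<in>{1..n}.
      ?t j g * cstar (?t k g) * (?t k g' * cstar (?t j g')))"
    by (subst sum.swap, subst (2) sum.swap, subst (3) sum.swap, subst (2) sum.swap) (rule refl)
  also have "\<dots> = (\<Sum>g\<in>?G. \<Sum>g'\<in>?G. tensor_frame_entry \<tau> n m g g' * tensor_frame_entry \<tau> n m g' g)"
    unfolding tensor_frame_entry_def by (simp add: sum_product ac_simps)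
  finally show ?thesis .
qed

lemma sum_sum_same_fiber:
  fixes D :: "'b \<Rightarrow> 'a::comm_semiring_1"
  assumes "finite G"
  shows "(\<Sum>g\<in>G. \<Sum>g'\<in>G. if \<kappa> g = \<kappa> g' then D g * D g' else 0)
       = (\<Sum>c\<in>\<kappa> ` G. (\<Sum>g | g \<in> G \<and> \<kappa> g = c. D g) * (\<Sum>g | g \<in> G \<and> \<kappa> g = c. D g))"
proof -
  let ?\<nu> = "\<lambda>c. \<Sum>g | g \<in> G \<and> \<kappa> g = c. D g"
  have "(\<Sum>g'\<in>G. if \<kappa> g = \<kappa> g' then D g * D g' else 0) = D g * ?\<nu> (\<kappa> g)" for g
    using sum.inter_filter[OF assms, of "\<lambda>g'. D g * D g'" "\<lambda>g'. \<kappa> g' = \<kappa> g"]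
    by (simp add: sum_distrib_left eq_commute conj_commute)
  then have "(\<Sum>g\<in>G. \<Sum>g'\<in>G. if \<kappa> g = \<kappa> g' then D g * D g' else 0) = (\<Sum>g\<in>G. D g * ?\<nu> (\<kappa> g))"
    by simp
  also have "\<dots> = (\<Sum>c\<in>\<kappa> ` G. \<Sum>g | g \<in> G \<and> \<kappa> g = c. D g * ?\<nu> (\<kappa> g))"
    by (rule sum.image_gen[OF assms])
  also have "\<dots> = (\<Sum>c\<in>\<kappa> ` G. ?\<nu> c * ?\<nu> c)"
    by (intro sum.cong refl) (auto simp: sum_distrib_right)
  finally show ?thesis .
qed

text \<open>Cauchy--Schwarz for self-adjoint elements: \<open>\<Sum>\<^sub>c \<nu>\<^sub>c\<^sup>2 - s\<^sup>2/|C| = \<Sum>\<^sub>c (\<nu>\<^sub>c - s/|C|)\<^sup>2\<close>.\<close>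

lemma norm_positive_sum_squares_minus:
  fixes \<nu> :: "'b \<Rightarrow> 'a::comm_cstar_algebra"
  assumes "finite C" and "C \<noteq> {}" and sa: "\<And>c. c \<in> C \<Longrightarrow> cstar (\<nu> c) = \<nu> c"
    and sum: "(\<Sum>c\<in>C. \<nu> c) = of_real s"
  shows "norm_positive ((\<Sum>c\<in>C. \<nu> c * \<nu> c) - of_real (s\<^sup>2 / card C))"
proof -
  define x where "x = s / card C"
  have "card C > 0" using assms by (simp add: card_gt_0_iff)
  have "(\<Sum>c\<in>C. (\<nu> c - of_real x) * (\<nu> c - of_real x))
      = (\<Sum>c\<in>C. \<nu> c * \<nu> c - 2 * of_real x * \<nu> c + of_real (x * x))"
    by (intro sum.cong refl) (simp add: algebra_simps)
  also have "\<dots> = (\<Sum>c\<in>C. \<nu> c * \<nu> c) - 2 * of_real x * (\<Sum>c\<in>C. \<nu> c) + of_nat (card C) * of_real (x * x)"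
    by (simp add: sum.distrib sum_subtractf sum_distrib_left)
  also have "\<dots> = (\<Sum>c\<in>C. \<nu> c * \<nu> c) - of_real (2 * x * s - card C * (x * x))"
    unfolding sum by (simp add: algebra_simps)
  also have "2 * x * s - card C * (x * x) = s\<^sup>2 / card C"
    using \<open>card C > 0\<close> unfolding x_def by (simp add: field_simps power2_eq_square)
  finally have "(\<Sum>c\<in>C. \<nu> c * \<nu> c) - of_real (s\<^sup>2 / card C)
      = (\<Sum>c\<in>C. (\<nu> c - of_real x) * (\<nu> c - of_real x))" ..
  also have "norm_positive \<dots>"
    using sa by (intro norm_positive_sum norm_positive_square) simp
  finally show ?thesis .
qed

lemma norm_positive_frame_potential_minus:
  fixes \<tau> :: "nat \<Rightarrow> nat \<Rightarrow> 'a::comm_cstar_algebra"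
  assumes "1 \<le> d" and unit: "\<And>j. j \<in> {1..n} \<Longrightarrow> hinner d (\<tau> j) (\<tau> j) = 1"
  shows "norm_positive (frame_potential d \<tau> n m - of_real (real n ^ 2 / real ((d + m - 1) choose m)))"
proof -
  define G where "G = multi_indices d m"
  define F where "F = tensor_frame_entry \<tau> n m"
  define C where "C = index_mset m ` G"
  define \<nu> where "\<nu> c = (\<Sum>g | g \<in> G \<and> index_mset m g = c. F g g)" for c
  define Q where "Q = (\<Sum>g\<in>G. \<Sum>g'\<in>G. if index_mset m g = index_mset m g' then 0 else F g g' * cstar (F g g'))"
  define K where "K = card C"
  define N where "N = (d + m - 1) choose m"
  have "finite G" "finite C" "C \<noteq> {}"
    using multi_indices_nonempty[OF \<open>1 \<le> d\<close>] by (simp_all add: G_def C_def)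
  have "K \<le> N" unfolding K_def N_def C_def G_def by (rule card_index_mset_image_le)
  have "0 < K" unfolding K_def using \<open>finite C\<close> \<open>C \<noteq> {}\<close> by (simp add: card_gt_0_iff)
  have "F g g' * F g' g = (if index_mset m g = index_mset m g' then F g g * F g' g' else 0)
      + (if index_mset m g = index_mset m g' then 0 else F g g' * cstar (F g g'))" for g g'
    using tensor_frame_entry_cong[of m g g' \<tau> n] by (simp add: F_def cstar_tensor_frame_entry)
  then have "frame_potential d \<tau> n m
      = (\<Sum>g\<in>G. \<Sum>g'\<in>G. if index_mset m g = index_mset m g' then F g g * F g' g' else 0) + Q"
    unfolding frame_potential_eq_tensor_frame F_def[symmetric] G_def[symmetric] Q_def
    by (simp add: sum.distrib)
  also have "(\<Sum>g\<in>G. \<Sum>g'\<in>G. if index_mset m g = index_mset m g' then F g g * F g' g' else 0)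
      = (\<Sum>c\<in>C. \<nu> c * \<nu> c)"
    unfolding C_def \<nu>_def by (rule sum_sum_same_fiber[OF \<open>finite G\<close>])
  finally have split: "frame_potential d \<tau> n m - of_real (real n ^ 2 / real N)
      = Q + ((\<Sum>c\<in>C. \<nu> c * \<nu> c) - of_real (real n ^ 2 / K)) + of_real (real n ^ 2 / K - real n ^ 2 / N)"
    by (simp add: algebra_simps)
  have "(\<Sum>c\<in>C. \<nu> c) = (\<Sum>g\<in>G. F g g)"
    unfolding \<nu>_def C_def by (rule sum.image_gen[OF \<open>finite G\<close>, symmetric])
  also have "\<dots> = (\<Sum>j\<in>{1..n}. hinner d (\<tau> j) (\<tau> j) ^ m)"
    unfolding F_def G_def tensor_frame_entry_def hinner_power by (rule sum.swap)
  also have "\<dots> = of_real (real n)" using unit by simp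
  finally have "norm_positive ((\<Sum>c\<in>C. \<nu> c * \<nu> c) - of_real (real n ^ 2 / K))"
    unfolding K_def using \<open>finite C\<close> \<open>C \<noteq> {}\<close>
    by (intro norm_positive_sum_squares_minus) (auto simp: \<nu>_def F_def cstar_tensor_frame_entry)
  moreover have "norm_positive Q"
    unfolding Q_def by (intro norm_positive_sum) (simp add: norm_positive_zero norm_positive_mult_cstar)
  moreover have "norm_positive (of_real (real n ^ 2 / K - real n ^ 2 / N) :: 'a)"
    using \<open>K \<le> N\<close> \<open>0 < K\<close> by (intro norm_positive_of_real) (simp add: frac_le)
  ultimately show ?thesis unfolding N_def[symmetric] split by (intro norm_positive_add)
qed

lemma cstar_frame_potential: "cstar (frame_potential d \<tau> n m) = frame_potential d \<tau> n m"
  unfolding frame_potential_def by (simp add: cstar_hinner mult.commute)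

lemma norm_frame_potential_le:
  "norm (frame_potential d \<tau> n m) \<le> (\<Sum>j\<in>{1..n}. \<Sum>k\<in>{1..n}. norm (hinner d (\<tau> j) (\<tau> k)) ^ (2 * m))"
proof -
  have "norm (hinner d (\<tau> j) (\<tau> k) ^ m * hinner d (\<tau> k) (\<tau> j) ^ m)
      \<le> norm (hinner d (\<tau> j) (\<tau> k)) ^ (2 * m)" for j k
  proof -
    have "norm (hinner d (\<tau> k) (\<tau> j)) = norm (hinner d (\<tau> j) (\<tau> k))"
      by (metis cstar_hinner norm_cstar)
    then show ?thesis
      using norm_mult_ineq[of "hinner d (\<tau> j) (\<tau> k) ^ m" "hinner d (\<tau> k) (\<tau> j) ^ m"]
        norm_power_ineq[of "hinner d (\<tau> j) (\<tau> k)" m] norm_power_ineq[of "hinner d (\<tau> k) (\<tau> j)" m]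
      by (simp add: mult_2 power_add) (meson mult_mono norm_ge_zero order_trans)
  qed
  then show ?thesis
    unfolding frame_potential_def by (intro order_trans[OF norm_sum] sum_mono)
qed

lemma Max_offdiag_ge:
  fixes f :: "nat \<Rightarrow> nat \<Rightarrow> real"
  assumes "2 \<le> n" and diag: "\<And>j. j \<in> {1..n} \<Longrightarrow> f j j = 1" and "0 < N"
    and total: "real n ^ 2 / N \<le> (\<Sum>j\<in>{1..n}. \<Sum>k\<in>{1..n}. f j k)"
  shows "1 / (real n - 1) * (real n / N - 1) \<le> Max {f j k | j k. j \<in> {1..n} \<and> k \<in> {1..n} \<and> j \<noteq> k}"
proof -
  define P where "P = {f j k | j k. j \<in> {1..n} \<and> k \<in> {1..n} \<and> j \<noteq> k}"
  have "P \<subseteq> (\<lambda>(j, k). f j k) ` ({1..n} \<times> {1..n})" unfolding P_def by auto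
  then have "finite P" by (rule finite_subset) simp
  then have le_Max: "f j k \<le> Max P" if "j \<in> {1..n}" "k \<in> {1..n}" "j \<noteq> k" for j k
    using that by (intro Max_ge) (auto simp: P_def)
  have row: "(\<Sum>k\<in>{1..n}. f j k) \<le> 1 + (real n - 1) * Max P" if j: "j \<in> {1..n}" for j
  proof -
    have "(\<Sum>k\<in>{1..n}. f j k) = f j j + (\<Sum>k\<in>{1..n} - {j}. f j k)"
      using j by (simp add: sum.remove)
    also have "(\<Sum>k\<in>{1..n} - {j}. f j k) \<le> (\<Sum>k\<in>{1..n} - {j}. Max P)"
      using j le_Max by (intro sum_mono) auto
    also have "\<dots> = (real n - 1) * Max P" using j by (simp add: of_nat_diff)
    finally show ?thesis using diag[OF j] by simp
  qed
  have "(\<Sum>j\<in>{1..n}. \<Sum>k\<in>{1..n}. f j k) \<le> (\<Sum>j\<in>{1..n}. 1 + (real n - 1) * Max P)"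
    using row by (rule sum_mono)
  with total have "real n ^ 2 / N \<le> real n * (1 + (real n - 1) * Max P)" by simp
  then have "real n * (real n / N - 1) \<le> real n * ((real n - 1) * Max P)"
    by (simp add: power2_eq_square algebra_simps)
  then have "real n / N - 1 \<le> (real n - 1) * Max P"
    using \<open>2 \<le> n\<close> by simp
  then show ?thesis unfolding P_def[symmetric] using \<open>2 \<le> n\<close> by (simp add: field_simps)
qed

lemma frame_potential_bounds:
  fixes \<tau> :: "nat \<Rightarrow> nat \<Rightarrow> 'a::comm_cstar_algebra" and m :: nat
  assumes "1 \<le> d" and unit: "\<And>j. j \<in> {1..n} \<Longrightarrow> hinner d (\<tau> j) (\<tau> j) = 1"
  defines "s \<equiv> \<Sum>j\<in>{1..n}. \<Sum>k\<in>{1..n}. norm (hinner d (\<tau> j) (\<tau> k)) ^ (2 * m)"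
    and "N \<equiv> (d + m - 1) choose m"
  shows "cle (frame_potential d \<tau> n m) (of_real s)"
    and "cle (of_real (real n ^ 2 / N)) (frame_potential d \<tau> n m)"
    and "2 \<le> n \<Longrightarrow> 1 / (real n - 1) * (real n / N - 1)
           \<le> Max {norm (hinner d (\<tau> j) (\<tau> k)) ^ (2 * m) | j k. j \<in> {1..n} \<and> k \<in> {1..n} \<and> j \<noteq> k}"
proof -
  have upper: "norm_positive (of_real s - frame_potential d \<tau> n m)"
    unfolding s_def by (intro norm_positive_of_real_diff cstar_frame_potential norm_frame_potential_le)
  have lower: "norm_positive (frame_potential d \<tau> n m - of_real (real n ^ 2 / N))"
    unfolding N_def using \<open>1 \<le> d\<close> unit by (rule norm_positive_frame_potential_minus)
  show "cle (frame_potential d \<tau> n m) (of_real s)"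
    using upper cstar_frame_potential by (rule cle_if_norm_positive)
  show "cle (of_real (real n ^ 2 / N)) (frame_potential d \<tau> n m)"
    using lower by (rule cle_if_norm_positive) simp
  assume "2 \<le> n"
  moreover have "0 < N" unfolding N_def using \<open>1 \<le> d\<close> by simp
  moreover have "real n ^ 2 / N \<le> s" by (rule le_if_norm_positive_between[OF upper lower])
  ultimately show "1 / (real n - 1) * (real n / N - 1)
      \<le> Max {norm (hinner d (\<tau> j) (\<tau> k)) ^ (2 * m) | j k. j \<in> {1..n} \<and> k \<in> {1..n} \<and> j \<noteq> k}"
    unfolding s_def using unit by (intro Max_offdiag_ge) simp_all
qed

theorem theorem2p2:
  fixes \<tau> :: "nat \<Rightarrow> nat \<Rightarrow> 'a::comm_cstar_algebra"
    and d n m :: nat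
  assumes "1 \<le> d" and "d \<le> n"
    and "\<And>j. j \<in> {1..n} \<Longrightarrow> hinner d (\<tau> j) (\<tau> j) = 1"
    and "1 \<le> m"
  shows "cle (\<Sum>j\<in>{1..n}. \<Sum>k\<in>{1..n}. hinner d (\<tau> j) (\<tau> k) ^ m * hinner d (\<tau> k) (\<tau> j) ^ m)
             (of_real (\<Sum>j\<in>{1..n}. \<Sum>k\<in>{1..n}. norm (hinner d (\<tau> j) (\<tau> k)) ^ (2 * m)))
       \<and> cle (of_real (real n ^ 2 / real ((d + m - 1) choose m)))
             (\<Sum>j\<in>{1..n}. \<Sum>k\<in>{1..n}. hinner d (\<tau> j) (\<tau> k) ^ m * hinner d (\<tau> k) (\<tau> j) ^ m)
       \<and> cle (\<Sum>j\<in>{1..n}. \<Sum>k\<in>{1..n}. hinner d (\<tau> j) (\<tau> k) * hinner d (\<tau> k) (\<tau> j))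
             (of_real (\<Sum>j\<in>{1..n}. \<Sum>k\<in>{1..n}. norm (hinner d (\<tau> j) (\<tau> k)) ^ 2))
       \<and> cle (of_real (real n ^ 2 / real d))
             (\<Sum>j\<in>{1..n}. \<Sum>k\<in>{1..n}. hinner d (\<tau> j) (\<tau> k) * hinner d (\<tau> k) (\<tau> j))
       \<and> (2 \<le> n \<longrightarrow>
            Max {norm (hinner d (\<tau> j) (\<tau> k)) ^ (2 * m) | j k. j \<in> {1..n} \<and> k \<in> {1..n} \<and> j \<noteq> k}
              \<ge> 1 / (real n - 1) * (real n / real ((d + m - 1) choose m) - 1)
          \<and> Max {norm (hinner d (\<tau> j) (\<tau> k)) ^ 2 | j k. j \<in> {1..n} \<and> k \<in> {1..n} \<and> j \<noteq> k}
              \<ge> (real n - real d) / (real d * (real n - 1)))"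
proof -
  note bounds_m = frame_potential_bounds[where \<tau> = \<tau> and n = n and m = m, OF assms(1,3)]
    and bounds_1 = frame_potential_bounds[where \<tau> = \<tau> and n = n and m = 1, OF assms(1,3)]
  have "(real n - real d) / (real d * (real n - 1)) = 1 / (real n - 1) * (real n / real d - 1)"
    using \<open>1 \<le> d\<close> by (simp add: field_simps)
  with bounds_m bounds_1 show ?thesis unfolding frame_potential_def by simp
qed

end
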